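(* Let $\mathcal{L}$ be a language with semantic structure $\mathcal{S}=(\Sigma,I)$. For every $A\in\mathrm{Abs}(\wp(\Sigma))$, $A$ is strongly preserving for $\mathcal{L}$ if and only if $A\sqsubseteq\mathrm{AD}_{\mathcal{L}}$.
   Context: A language $\mathcal{L}$ has formulae $\varphi::=p\mid f(\varphi_1,\dots,\varphi_n)$, $p$ in a set $AP$ of atoms, $f$ in a finite set $Op$ of operators of arity $\ge1$. A semantic structure $\mathcal{S}=(\Sigma,I)$ gives $\mathbf{p}=I(p)\subseteq\Sigma$ and $\mathbf{f}=I(f):\wp(\Sigma)^{n}\to\wp(\Sigma)$, with $[\![p]\!]_{\mathcal{S}}=\mathbf{p}$, $[\![f(\varphi_1,..,\varphi_n)]\!]_{\mathcal{S}}=\mathbf{f}([\![\varphi_1]\!]_{\mathcal{S}},..)$. An abstract domain $A$ of $\wp(\Sigma)_\subseteq$ is a complete lattice with a Galois insertion $(\alpha,\wp(\Sigma),A,\gamma)$ (monotone maps, $\alpha(S)\le_A a\iff S\subseteq\gamma(a)$, $\alpha\circ\gamma=\mathrm{id}$), with associated closure $\mu_A=\gamma\circ\alpha$; $\mathrm{Abs}(\wp(\Sigma))$ identifies domains with equal closures and is ordered by $A_1\sqsubseteq A_2$ iff $\mu_{A_1}(S)\subseteq\mu_{A_2}(S)$ for all $S$. Any closure $\mu$ on $\wp(\Sigma)$ (monotone, idempotent, extensive) is an abstract domain (its image, with $\alpha=\mu$ and $\gamma$ the inclusion). $A$ induces the abstract semantics $[\![p]\!]^A_{\mathcal{S}}=\alpha(\mathbf{p})$,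 $[\![f(\varphi_1,..,\varphi_n)]\!]^A_{\mathcal{S}}=\alpha(\mathbf{f}(\gamma([\![\varphi_1]\!]^A_{\mathcal{S}}),..,\gamma([\![\varphi_n]\!]^A_{\mathcal{S}})))$. $A$ is strongly preserving for $\mathcal{L}$ if for all $\varphi\in\mathcal{L}$, $S\subseteq\Sigma$: $\alpha(S)\le_A[\![\varphi]\!]^A_{\mathcal{S}}\iff S\subseteq[\![\varphi]\!]_{\mathcal{S}}$. $\mathrm{AD}_{\mathcal{L}}$ is the abstract domain given by the closure whose image is the set of all intersections of subfamilies of $\{[\![\varphi]\!]_{\mathcal{S}}\mid\varphi\in\mathcal{L}\}$ (the empty intersection being $\Sigma$), i.e. $S\mapsto\bigcap\{[\![\varphi]\!]_{\mathcal{S}}\mid\varphi\in\mathcal{L},S\subseteq[\![\varphi]\!]_{\mathcal{S}}\}$. *)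

theory Defs
  imports Main
begin

datatype ('ap, 'op) form = Atom 'ap | App 'op "('ap, 'op) form list"

inductive wf_form :: "('op \<Rightarrow> nat) \<Rightarrow> ('ap, 'op) form \<Rightarrow> bool" for ar where
  wf_Atom: "wf_form ar (Atom p)"
| wf_App: "length xs = ar f \<Longrightarrow> (\<And>x. x \<in> set xs \<Longrightarrow> wf_form ar x) \<Longrightarrow> wf_form ar (App f xs)"

text \<open>Concrete semantics in the semantic structure (UNIV :: 's set, I), where
  I is given by Ia on atoms and Io on operators (n-ary functions on sets, as
  functions on lists of length n).\<close>
fun sem :: "('ap \<Rightarrow> 's set) \<Rightarrow> ('op \<Rightarrow> 's set list \<Rightarrow> 's set) \<Rightarrow> ('ap, 'op) form \<Rightarrow> 's set" where
  "sem Ia Io (Atom p) = Ia p"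
| "sem Ia Io (App f xs) = Io f (map (\<lambda>x. sem Ia Io x) xs)"

fun abs_sem :: "('s set \<Rightarrow> 'a) \<Rightarrow> ('a \<Rightarrow> 's set) \<Rightarrow> ('ap \<Rightarrow> 's set) \<Rightarrow>
    ('op \<Rightarrow> 's set list \<Rightarrow> 's set) \<Rightarrow> ('ap, 'op) form \<Rightarrow> 'a" where
  "abs_sem \<alpha> \<gamma> Ia Io (Atom p) = \<alpha> (Ia p)"
| "abs_sem \<alpha> \<gamma> Ia Io (App f xs) = \<alpha> (Io f (map (\<lambda>x. \<gamma> (abs_sem \<alpha> \<gamma> Ia Io x)) xs))"

definition galois_insertion :: "('s set \<Rightarrow> 'a::complete_lattice) \<Rightarrow> ('a \<Rightarrow> 's set) \<Rightarrow> bool" where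
  "galois_insertion \<alpha> \<gamma> \<longleftrightarrow> mono \<alpha> \<and> mono \<gamma> \<and>
     (\<forall>S a. \<alpha> S \<le> a \<longleftrightarrow> S \<subseteq> \<gamma> a) \<and> (\<forall>a. \<alpha> (\<gamma> a) = a)"

definition strongly_preserving :: "('op \<Rightarrow> nat) \<Rightarrow> ('ap \<Rightarrow> 's set) \<Rightarrow> ('op \<Rightarrow> 's set list \<Rightarrow> 's set)
    \<Rightarrow> ('s set \<Rightarrow> 'a::complete_lattice) \<Rightarrow> ('a \<Rightarrow> 's set) \<Rightarrow> bool" where
  "strongly_preserving ar Ia Io \<alpha> \<gamma> \<longleftrightarrow>
     (\<forall>\<phi> S. wf_form ar \<phi> \<longrightarrow> (\<alpha> S \<le> abs_sem \<alpha> \<gamma> Ia Io \<phi> \<longleftrightarrow> S \<subseteq> sem Ia Io \<phi>))"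

definition AD :: "('op \<Rightarrow> nat) \<Rightarrow> ('ap \<Rightarrow> 's set) \<Rightarrow> ('op \<Rightarrow> 's set list \<Rightarrow> 's set) \<Rightarrow> 's set \<Rightarrow> 's set" where
  "AD ar Ia Io S = \<Inter>{sem Ia Io \<phi> | \<phi>. wf_form ar \<phi> \<and> S \<subseteq> sem Ia Io \<phi>}"

text \<open>Order on Abs(P(Sigma)) via closures.\<close>
definition abs_le :: "('s set \<Rightarrow> 's set) \<Rightarrow> ('s set \<Rightarrow> 's set) \<Rightarrow> bool" where
  "abs_le \<mu>1 \<mu>2 \<longleftrightarrow> (\<forall>S. \<mu>1 S \<subseteq> \<mu>2 S)"

end

theory Submission
  imports Defs
begin

text \<open>Both sides of the equivalence say that every denotation of a formula is a fixpoint of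
  the closure \<open>\<gamma> \<circ> \<alpha>\<close>, i.e. is represented exactly in the abstract domain. For strong
  preservation this follows by instantiating the defining equivalence at \<open>S = \<lbrakk>\<phi>\<rbrakk>\<close> and at
  \<open>S = \<gamma>(\<lbrakk>\<phi>\<rbrakk>\<^sup>A)\<close>, and conversely such fixpoints make the abstract semantics exact by induction
  on formulae. For the order, \<open>AD\<^sub>\<L>\<close> fixes every denotation, and an extensive monotone
  closure lies below \<open>AD\<^sub>\<L>\<close> exactly when it fixes every denotation.\<close>

definition sem_fixed :: "('s set \<Rightarrow> 's set) \<Rightarrow> ('op \<Rightarrow> nat) \<Rightarrow> ('ap \<Rightarrow> 's set) \<Rightarrow>
    ('op \<Rightarrow> 's set list \<Rightarrow> 's set) \<Rightarrow> bool" where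
  "sem_fixed \<mu> ar Ia Io \<longleftrightarrow> (\<forall>\<phi>. wf_form ar \<phi> \<longrightarrow> \<mu> (sem Ia Io \<phi>) = sem Ia Io \<phi>)"

lemma sem_fixedD:
  "sem_fixed \<mu> ar Ia Io \<Longrightarrow> wf_form ar \<phi> \<Longrightarrow> \<mu> (sem Ia Io \<phi>) = sem Ia Io \<phi>"
  unfolding sem_fixed_def by blast

lemma galois_insertion_adjoint:
  "galois_insertion \<alpha> \<gamma> \<Longrightarrow> \<alpha> S \<le> a \<longleftrightarrow> S \<subseteq> \<gamma> a"
  unfolding galois_insertion_def by blast

lemma galois_insertion_alpha_gamma:
  "galois_insertion \<alpha> \<gamma> \<Longrightarrow> \<alpha> (\<gamma> a) = a"
  unfolding galois_insertion_def by blast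

lemma galois_insertion_closure_extensive:
  "galois_insertion \<alpha> \<gamma> \<Longrightarrow> S \<subseteq> (\<gamma> \<circ> \<alpha>) S"
  by (simp add: galois_insertion_adjoint[symmetric])

lemma galois_insertion_closure_mono:
  fixes \<alpha> :: "'s set \<Rightarrow> 'a::complete_lattice"
  assumes "galois_insertion \<alpha> \<gamma>"
  shows "mono (\<gamma> \<circ> \<alpha>)"
proof (rule monoI)
  fix S T :: "'s set"
  assume "S \<subseteq> T"
  moreover have "mono \<alpha>" and "mono \<gamma>"
    using assms unfolding galois_insertion_def by auto
  ultimately show "(\<gamma> \<circ> \<alpha>) S \<subseteq> (\<gamma> \<circ> \<alpha>) T"
    by (simp add: monoD)
qed

lemma abs_sem_exact:
  assumes "sem_fixed (\<gamma> \<circ> \<alpha>) ar Ia Io" and "wf_form ar \<phi>"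
  shows "\<gamma> (abs_sem \<alpha> \<gamma> Ia Io \<phi>) = sem Ia Io \<phi>"
  using assms(2)
proof (induction rule: wf_form.induct)
  case (wf_Atom p)
  then show ?case
    using sem_fixedD[OF assms(1) wf_form.wf_Atom] by simp
next
  case (wf_App xs f)
  have args: "map (\<lambda>x. \<gamma> (abs_sem \<alpha> \<gamma> Ia Io x)) xs = map (sem Ia Io) xs"
    using wf_App.IH by simp
  have "\<gamma> (\<alpha> (sem Ia Io (App f xs))) = sem Ia Io (App f xs)"
    using sem_fixedD[OF assms(1) wf_form.wf_App[OF wf_App.hyps]] by simp
  then show ?case by (simp only: abs_sem.simps sem.simps args)
qed

lemma strongly_preserving_iff_sem_fixed:
  fixes Ia :: "'ap \<Rightarrow> 's set" and ar :: "'op \<Rightarrow> nat"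
  assumes gi: "galois_insertion \<alpha> \<gamma>"
  shows "strongly_preserving ar Ia Io \<alpha> \<gamma> \<longleftrightarrow> sem_fixed (\<gamma> \<circ> \<alpha>) ar Ia Io"
proof
  assume sp: "strongly_preserving ar Ia Io \<alpha> \<gamma>"
  show "sem_fixed (\<gamma> \<circ> \<alpha>) ar Ia Io"
    unfolding sem_fixed_def
  proof (intro allI impI)
    fix \<phi> :: "('ap, 'op) form"
    assume "wf_form ar \<phi>"
    define a where "a = abs_sem \<alpha> \<gamma> Ia Io \<phi>"
    have char: "\<And>S. \<alpha> S \<le> a \<longleftrightarrow> S \<subseteq> sem Ia Io \<phi>"
      using sp \<open>wf_form ar \<phi>\<close> unfolding strongly_preserving_def a_def by blast
    have "\<gamma> a \<subseteq> sem Ia Io \<phi>"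
      using char[of "\<gamma> a"] galois_insertion_alpha_gamma[OF gi] by simp
    moreover have "sem Ia Io \<phi> \<subseteq> \<gamma> a"
      using char[of "sem Ia Io \<phi>"] galois_insertion_adjoint[OF gi] by blast
    ultimately have "\<gamma> a = sem Ia Io \<phi>" by blast
    then show "(\<gamma> \<circ> \<alpha>) (sem Ia Io \<phi>) = sem Ia Io \<phi>"
      using galois_insertion_alpha_gamma[OF gi] by (metis comp_apply)
  qed
next
  assume fixed: "sem_fixed (\<gamma> \<circ> \<alpha>) ar Ia Io"
  show "strongly_preserving ar Ia Io \<alpha> \<gamma>"
    unfolding strongly_preserving_def
  proof (intro allI impI)
    fix \<phi> :: "('ap, 'op) form" and S
    assume "wf_form ar \<phi>"
    then have "\<gamma> (abs_sem \<alpha> \<gamma> Ia Io \<phi>) = sem Ia Io \<phi>"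
      by (rule abs_sem_exact[OF fixed])
    then show "\<alpha> S \<le> abs_sem \<alpha> \<gamma> Ia Io \<phi> \<longleftrightarrow> S \<subseteq> sem Ia Io \<phi>"
      by (simp add: galois_insertion_adjoint[OF gi])
  qed
qed

lemma abs_le_AD_iff_sem_fixed:
  fixes Ia :: "'ap \<Rightarrow> 's set" and ar :: "'op \<Rightarrow> nat"
  assumes ext: "\<And>S. S \<subseteq> \<mu> S" and mono: "mono \<mu>"
  shows "abs_le \<mu> (AD ar Ia Io) \<longleftrightarrow> sem_fixed \<mu> ar Ia Io"
proof
  assume le: "abs_le \<mu> (AD ar Ia Io)"
  show "sem_fixed \<mu> ar Ia Io"
    unfolding sem_fixed_def
  proof (intro allI impI)
    fix \<phi> :: "('ap, 'op) form"
    assume "wf_form ar \<phi>"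
    then have "AD ar Ia Io (sem Ia Io \<phi>) \<subseteq> sem Ia Io \<phi>"
      unfolding AD_def by blast
    then show "\<mu> (sem Ia Io \<phi>) = sem Ia Io \<phi>"
      using le ext unfolding abs_le_def by blast
  qed
next
  assume fixed: "sem_fixed \<mu> ar Ia Io"
  have "\<mu> S \<subseteq> sem Ia Io \<phi>" if "wf_form ar \<phi>" "S \<subseteq> sem Ia Io \<phi>" for S \<phi>
  proof -
    have "\<mu> S \<subseteq> \<mu> (sem Ia Io \<phi>)"
      using monoD[OF mono that(2)] .
    also have "\<dots> = sem Ia Io \<phi>"
      using sem_fixedD[OF fixed that(1)] .
    finally show ?thesis .
  qed
  then show "abs_le \<mu> (AD ar Ia Io)"
    unfolding abs_le_def AD_def by blast
qed

theorem theorem5p4: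
  fixes ar :: "'op::finite \<Rightarrow> nat"
    and Ia :: "'ap \<Rightarrow> 's set"
    and Io :: "'op \<Rightarrow> 's set list \<Rightarrow> 's set"
    and \<alpha> :: "'s set \<Rightarrow> 'a::complete_lattice"
    and \<gamma> :: "'a \<Rightarrow> 's set"
  assumes "\<forall>f. 1 \<le> ar f"
    and "galois_insertion \<alpha> \<gamma>"
  shows "strongly_preserving ar Ia Io \<alpha> \<gamma> \<longleftrightarrow> abs_le (\<gamma> \<circ> \<alpha>) (AD ar Ia Io)"
proof -
  have "abs_le (\<gamma> \<circ> \<alpha>) (AD ar Ia Io) \<longleftrightarrow> sem_fixed (\<gamma> \<circ> \<alpha>) ar Ia Io"
    by (rule abs_le_AD_iff_sem_fixed[OF galois_insertion_closure_extensive[OF assms(2)]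
          galois_insertion_closure_mono[OF assms(2)]])
  then show ?thesis
    using strongly_preserving_iff_sem_fixed[OF assms(2)] by simp
qed

end
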